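(* Let $r\ge0$ be an integer, $\lambda\ge0$, $\theta^*,\epsilon\in\mathbb{R}^n$ and $y=\theta^*+\epsilon$. Let $\hat\theta^{(r,\lambda)}$ be any $r$th order Minmax Trend Filtering estimator computed from $y$ with tuning parameter $\lambda$. Then for every $i\in[n]$, $$\max_{J\in\mathcal{I}:\, i\in J}\Big(\mathrm{Bias}^{(r)}_-(i,J,\theta^* )-SE^{(r)}(i,J,\lambda)\Big)\le \hat\theta^{(r,\lambda)}_i-\theta^*_i\le \min_{J\in\mathcal{I}:\, i\in J}\Big(\mathrm{Bias}^{(r)}_+(i,J,\theta^* )+SE^{(r)}(i,J,\lambda)\Big).$$
   Context: $[n]=\{1,\dots,n\}$; an interval is $[a:b]=\{a,\dots,b\}$, $1\le a\le b\le n$; $\mathcal{I}$ is the set of all intervals; $v_I$ is the restriction of $v$ to $I$. For an interval $I=[a:b]$, $P^{(|I|,r)}$ is the orthogonal projection matrix in $\mathbb{R}^{|I|}$ onto $\{(p(a/n),\dots,p(b/n)): p \text{ a real polynomial of degree}\le r\}$ (this depends only on $|I|$); for $i\in I$, $(P^{(|I|,r)}v_I)_i$ is the entry of $P^{(|I|,r)}v_I$ at the position of $i$. For intervals $I\subseteq J=[j_1:j_2]$: $C_{I,J}=1$ if $I\cap\{j_1,j_2\}=\emptyset$, $C_{I,J}=-1$ if $I=J$, $C_{I,J}=0$ otherwise. An $r$th order Minmax Trend Filtering estimator with tuning $\lambda\ge0$ is any $\hat\theta\in\mathbb{R}^n$ such that for every $i$, $\max_{J\in\mathcal{I}: i\in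 J}\min_{I\in\mathcal{I}: i\in I\subseteq J}[(P^{(|I|,r)}y_I)_i+\lambda C_{I,J}/|I|]\le\hat\theta_i\le\min_{J\in\mathcal{I}: i\in J}\max_{I\in\mathcal{I}: i\in I\subseteq J}[(P^{(|I|,r)}y_I)_i-\lambda C_{I,J}/|I|]$. Biases: $\mathrm{Bias}^{(r)}_+(i,J,\theta^* )=\max_{I\in\mathcal{I}: i\in I\subseteq J}[(P^{(|I|,r)}\theta^*_I)_i-\theta^*_i]$ and $\mathrm{Bias}^{(r)}_-(i,J,\theta^* )=\min_{I\in\mathcal{I}: i\in I\subseteq J}[(P^{(|I|,r)}\theta^*_I)_i-\theta^*_i]$. Effective noise: $M^{(r)}=\max_{I\in\mathcal{I}}\big[\|P^{(|I|,r)}\epsilon_I\|_\infty\sqrt{|I|}\big]$. For $J=[j_1:j_2]\ni i$, $\mathrm{Dist}(i,\partial J)=\min\{i-j_1+1,\ j_2-i+1\}$, and $SE^{(r)}(i,J,\lambda)=\frac{M^{(r)}}{\sqrt{\mathrm{Dist}(i,\partial J)}}+\frac{M^{(r)}}{\sqrt{|J|}}+\frac{(M^{(r)})^2}{4\lambda}+\frac{\lambda}{|J|}$ (with $(M^{(r)})^2/(4\cdot 0)=+\infty$). *)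

theory Defs
  imports Complex_Main "HOL-Computational_Algebra.Polynomial" "HOL-Library.Extended_Real"
begin

text \<open>Vectors in R^n are functions nat => real; only the entries 1..n matter.
  An interval [a:b] is the pair (a,b) with 1 <= a <= b <= n.\<close>

type_synonym ivl = "nat \<times> nat"

definition intervals :: "nat \<Rightarrow> ivl set" where
  "intervals n = {(a,b). 1 \<le> a \<and> a \<le> b \<and> b \<le> n}"

definition ivl_set :: "ivl \<Rightarrow> nat set" where
  "ivl_set I = {fst I..snd I}"

definition ivl_card :: "ivl \<Rightarrow> nat" where
  "ivl_card I = snd I + 1 - fst I"

definition polyspace :: "nat \<Rightarrow> nat \<Rightarrow> ivl \<Rightarrow> (nat \<Rightarrow> real) set" where
  "polyspace n r I = {w. \<exists>p :: real poly. degree p \<le> r \<and>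
      (\<forall>k. w k = (if k \<in> ivl_set I then poly p (real k / real n) else 0))}"

text \<open>(P^{(|I|,r)} v_I)_i : the entry at position i of the orthogonal projection
  of v_I onto the polynomial space (w is the projection iff w lies in the
  space and v_I - w is orthogonal to the space).\<close>
definition projfit :: "nat \<Rightarrow> nat \<Rightarrow> (nat \<Rightarrow> real) \<Rightarrow> ivl \<Rightarrow> nat \<Rightarrow> real" where
  "projfit n r v I i = (THE w. w \<in> polyspace n r I \<and>
      (\<forall>u \<in> polyspace n r I. (\<Sum>k\<in>ivl_set I. (v k - w k) * u k) = 0)) i"

definition Cfun :: "ivl \<Rightarrow> ivl \<Rightarrow> real" where
  "Cfun I J = (if fst J \<notin> ivl_set I \<and> snd J \<notin> ivl_set I then 1
               else if I = J then -1 else 0)"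

definition ivls_at :: "nat \<Rightarrow> nat \<Rightarrow> ivl set" where
  "ivls_at n i = {J \<in> intervals n. i \<in> ivl_set J}"

definition subivls_at :: "nat \<Rightarrow> nat \<Rightarrow> ivl \<Rightarrow> ivl set" where
  "subivls_at n i J = {I \<in> intervals n. i \<in> ivl_set I \<and> ivl_set I \<subseteq> ivl_set J}"

definition is_minmax_TF :: "nat \<Rightarrow> nat \<Rightarrow> real \<Rightarrow> (nat \<Rightarrow> real) \<Rightarrow> (nat \<Rightarrow> real) \<Rightarrow> bool" where
  "is_minmax_TF n r lam y th \<longleftrightarrow> (\<forall>i \<in> {1..n}.
     (MAX J \<in> ivls_at n i. MIN I \<in> subivls_at n i J.
         projfit n r y I i + lam * Cfun I J / real (ivl_card I)) \<le> th i \<and>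
     th i \<le> (MIN J \<in> ivls_at n i. MAX I \<in> subivls_at n i J.
         projfit n r y I i - lam * Cfun I J / real (ivl_card I)))"

definition bias_plus :: "nat \<Rightarrow> nat \<Rightarrow> nat \<Rightarrow> ivl \<Rightarrow> (nat \<Rightarrow> real) \<Rightarrow> real" where
  "bias_plus n r i J th = (MAX I \<in> subivls_at n i J. projfit n r th I i - th i)"

definition bias_minus :: "nat \<Rightarrow> nat \<Rightarrow> nat \<Rightarrow> ivl \<Rightarrow> (nat \<Rightarrow> real) \<Rightarrow> real" where
  "bias_minus n r i J th = (MIN I \<in> subivls_at n i J. projfit n r th I i - th i)"

definition sup_norm_on :: "(nat \<Rightarrow> real) \<Rightarrow> ivl \<Rightarrow> real" where
  "sup_norm_on v I = (MAX k \<in> ivl_set I. \<bar>v k\<bar>)"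

definition eff_noise :: "nat \<Rightarrow> nat \<Rightarrow> (nat \<Rightarrow> real) \<Rightarrow> real" where
  "eff_noise n r eps = (MAX I \<in> intervals n.
      sup_norm_on (projfit n r eps I) I * sqrt (real (ivl_card I)))"

definition dist_bd :: "nat \<Rightarrow> ivl \<Rightarrow> nat" where
  "dist_bd i J = min (i + 1 - fst J) (snd J + 1 - i)"

text \<open>SE as an extended real; the term M^2/(4 lambda) is +infinity when lambda = 0.\<close>
definition SE :: "nat \<Rightarrow> nat \<Rightarrow> (nat \<Rightarrow> real) \<Rightarrow> nat \<Rightarrow> ivl \<Rightarrow> real \<Rightarrow> ereal" where
  "SE n r eps i J lam =
     ereal (eff_noise n r eps / sqrt (real (dist_bd i J))
            + eff_noise n r eps / sqrt (real (ivl_card J))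
            + lam / real (ivl_card J))
     + (if lam = 0 then \<infinity> else ereal ((eff_noise n r eps)\<^sup>2 / (4 * lam)))"

end

theory Submission
  imports Defs
begin

text \<open>Fix \<open>J \<ni> i\<close>. The estimator lies below the maximum over \<open>i \<in> I \<subseteq> J\<close> of
  \<open>(P y\<^sub>I)\<^sub>i - \<lambda> C\<^sub>I\<^sub>,\<^sub>J / |I|\<close>, so it suffices to bound each of these terms. Since the
  projection is linear, \<open>(P y\<^sub>I)\<^sub>i - \<theta>\<^sub>i\<close> splits into the bias \<open>(P \<theta>\<^sub>I)\<^sub>i - \<theta>\<^sub>i \<le> Bias\<^sub>+\<close> and the
  noise \<open>(P \<epsilon>\<^sub>I)\<^sub>i \<le> M / \<surd>|I|\<close>. The penalty pays for the noise: if \<open>I\<close> avoids both endpoints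
  of \<open>J\<close>, then \<open>M / \<surd>|I| - \<lambda> / |I| \<le> M\<^sup>2 / (4\<lambda>)\<close>; if \<open>I = J\<close>, the penalty costs \<open>\<lambda> / |J|\<close>;
  otherwise \<open>I\<close> contains \<open>i\<close> and an endpoint of \<open>J\<close>, so \<open>|I| \<ge> Dist(i, \<partial>J)\<close>. The lower
  bound is symmetric. That the projections exist (they are defined by a definite
  description) follows by Gram-Schmidt, adjoining one monomial at a time.\<close>

definition inner_on :: "'a set \<Rightarrow> ('a \<Rightarrow> real) \<Rightarrow> ('a \<Rightarrow> real) \<Rightarrow> real" where
  "inner_on A f g = (\<Sum>k\<in>A. f k * g k)"

definition orth_proj_on :: "'a set \<Rightarrow> ('a \<Rightarrow> real) set \<Rightarrow> ('a \<Rightarrow> real) \<Rightarrow> ('a \<Rightarrow> real) \<Rightarrow> bool" where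
  "orth_proj_on A S v w \<longleftrightarrow> w \<in> S \<and> (\<forall>u\<in>S. inner_on A (\<lambda>k. v k - w k) u = 0)"

definition lin_closed :: "('a \<Rightarrow> real) set \<Rightarrow> bool" where
  "lin_closed S \<longleftrightarrow> (\<forall>x\<in>S. \<forall>y\<in>S. \<forall>a c. (\<lambda>k. a * x k + c * y k) \<in> S)"

lemma inner_on_self_eq_0_iff:
  assumes "finite A"
  shows "inner_on A f f = 0 \<longleftrightarrow> (\<forall>k\<in>A. f k = 0)"
  using assms by (simp add: inner_on_def sum_nonneg_eq_0_iff)

lemma orth_proj_on_unique:
  assumes "finite A" "lin_closed S" "\<forall>w\<in>S. \<forall>k. k \<notin> A \<longrightarrow> w k = 0"
    and "orth_proj_on A S v w1" "orth_proj_on A S v w2"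
  shows "w1 = w2"
proof -
  define d where "d = (\<lambda>k. 1 * w1 k + (-1) * w2 k)"
  have "d \<in> S"
    using assms(2,4,5) unfolding d_def lin_closed_def orth_proj_on_def by blast
  then have "inner_on A (\<lambda>k. v k - w2 k) d - inner_on A (\<lambda>k. v k - w1 k) d = 0"
    using assms(4,5) by (simp add: orth_proj_on_def)
  then have "inner_on A d d = 0"
    by (simp add: inner_on_def d_def sum_subtractf[symmetric] algebra_simps)
  then have "\<forall>k\<in>A. w1 k = w2 k"
    using assms(1) by (simp add: inner_on_self_eq_0_iff d_def)
  moreover have "\<forall>k. k \<notin> A \<longrightarrow> w1 k = w2 k"
    using assms(3,4,5) unfolding orth_proj_on_def by metis
  ultimately show ?thesis by blast
qed

lemma orth_proj_on_add:
  assumes "lin_closed S" "orth_proj_on A S a wa" "orth_proj_on A S b wb"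
  shows "orth_proj_on A S (\<lambda>k. a k + b k) (\<lambda>k. wa k + wb k)"
proof -
  have "(\<lambda>k. 1 * wa k + 1 * wb k) \<in> S"
    using assms unfolding lin_closed_def orth_proj_on_def by blast
  moreover have "inner_on A (\<lambda>k. a k + b k - (wa k + wb k)) u
      = inner_on A (\<lambda>k. a k - wa k) u + inner_on A (\<lambda>k. b k - wb k) u" for u
    by (simp add: inner_on_def sum.distrib[symmetric] algebra_simps)
  ultimately show ?thesis
    using assms(2,3) by (simp add: orth_proj_on_def)
qed

text \<open>Gram-Schmidt: correct the projection of \<open>v\<close> onto \<open>S\<close> along the component \<open>b'\<close> of
  \<open>b\<close> orthogonal to \<open>S\<close>. If \<open>b'\<close> vanishes on \<open>A\<close>, then \<open>t = 0\<close> since \<open>x / 0 = 0\<close>, and the same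
  witness still works.\<close>
lemma orth_proj_on_extend:
  assumes "finite A" "lin_closed S" and proj: "\<And>v. \<exists>w. orth_proj_on A S v w"
  shows "\<exists>w. orth_proj_on A {\<lambda>k. w k + c * b k | w c. w \<in> S} v w"
proof -
  let ?S' = "{\<lambda>k. w k + c * b k | w c. w \<in> S}"
  obtain Pb where Pb: "orth_proj_on A S b Pb" using proj by blast
  obtain Pv where Pv: "orth_proj_on A S v Pv" using proj by blast
  define b' where "b' = (\<lambda>k. b k - Pb k)"
  define t where "t = inner_on A (\<lambda>k. v k - Pv k) b' / inner_on A b' b'"
  define w where "w = (\<lambda>k. Pv k + t * b' k)"
  have b'_orth: "inner_on A b' u = 0" if "u \<in> S" for u
    using Pb that by (simp add: orth_proj_on_def b'_def)
  have t: "t * inner_on A b' b' = inner_on A (\<lambda>k. v k - Pv k) b'"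
  proof (cases "inner_on A b' b' = 0")
    case True
    then have "\<forall>k\<in>A. b' k = 0"
      using assms(1) by (simp add: inner_on_self_eq_0_iff)
    then show ?thesis
      using True by (simp add: inner_on_def)
  qed (simp add: t_def)
  have "(\<lambda>k. 1 * Pv k + (- t) * Pb k) \<in> S"
    using assms(2) Pv Pb unfolding lin_closed_def orth_proj_on_def by blast
  then have "w \<in> ?S'"
    by (intro CollectI exI[of _ "\<lambda>k. 1 * Pv k + (- t) * Pb k"] exI[of _ t])
       (auto simp: w_def b'_def algebra_simps)
  moreover have "inner_on A (\<lambda>k. v k - w k) u' = 0" if "u' \<in> ?S'" for u'
  proof -
    obtain u c where u: "u \<in> S" "u' = (\<lambda>k. u k + c * b k)" using \<open>u' \<in> ?S'\<close> by blast
    define u'' where "u'' = (\<lambda>k. 1 * u k + c * Pb k)"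
    have "u'' \<in> S"
      using assms(2) u(1) Pb unfolding u''_def lin_closed_def orth_proj_on_def by blast
    have "inner_on A (\<lambda>k. v k - w k) u' = inner_on A (\<lambda>k. v k - Pv k) u'' - t * inner_on A b' u''
        + c * (inner_on A (\<lambda>k. v k - Pv k) b' - t * inner_on A b' b')"
      by (simp add: inner_on_def u(2) u''_def w_def b'_def algebra_simps sum.distrib
          sum_subtractf sum_distrib_left)
    then show ?thesis
      using t b'_orth[OF \<open>u'' \<in> S\<close>] Pv \<open>u'' \<in> S\<close> by (simp add: orth_proj_on_def)
  qed
  ultimately show ?thesis unfolding orth_proj_on_def by blast
qed

lemma finite_ivl_set: "finite (ivl_set I)"
  by (simp add: ivl_set_def)

definition monom_vec :: "nat \<Rightarrow> ivl \<Rightarrow> nat \<Rightarrow> nat \<Rightarrow> real" where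
  "monom_vec n I m k = (if k \<in> ivl_set I then (real k / real n) ^ m else 0)"

lemma lin_closed_polyspace: "lin_closed (polyspace n r I)"
  unfolding lin_closed_def
proof (intro ballI allI)
  fix x y a c assume "x \<in> polyspace n r I" "y \<in> polyspace n r I"
  then obtain p q where p: "degree p \<le> r" "\<forall>k. x k = (if k \<in> ivl_set I then poly p (real k / real n) else 0)"
    and q: "degree q \<le> r" "\<forall>k. y k = (if k \<in> ivl_set I then poly q (real k / real n) else 0)"
    unfolding polyspace_def by blast
  have "degree (smult a p + smult c q) \<le> r"
    using p q by (meson degree_add_le degree_smult_le order_trans)
  then show "(\<lambda>k. a * x k + c * y k) \<in> polyspace n r I"
    unfolding polyspace_def using p q by (intro CollectI exI[of _ "smult a p + smult c q"]) auto
qed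

lemma polyspace_vanishes_outside: "w \<in> polyspace n r I \<Longrightarrow> k \<notin> ivl_set I \<Longrightarrow> w k = 0"
  by (auto simp: polyspace_def)

lemma polyspace_0: "polyspace n 0 I = {\<lambda>k. w k + c * monom_vec n I 0 k | w c. w \<in> {\<lambda>k. 0}}"
proof (intro set_eqI iffI)
  fix x assume "x \<in> polyspace n 0 I"
  then obtain p where p: "degree p \<le> 0" "\<forall>k. x k = (if k \<in> ivl_set I then poly p (real k / real n) else 0)"
    unfolding polyspace_def by blast
  moreover obtain a where "p = [:a:]"
    using degree0_coeffs p(1) by blast
  ultimately have "x = (\<lambda>k. 0 + a * monom_vec n I 0 k)"
    by (auto simp: monom_vec_def)
  then show "x \<in> {\<lambda>k. w k + c * monom_vec n I 0 k | w c. w \<in> {\<lambda>k. 0}}"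
    by (intro CollectI exI[of _ "\<lambda>k. 0"] exI[of _ a] conjI) simp_all
next
  fix x assume "x \<in> {\<lambda>k. w k + c * monom_vec n I 0 k | w c. w \<in> {\<lambda>k. 0}}"
  then obtain c where "x = (\<lambda>k. c * monom_vec n I 0 k)" by auto
  then show "x \<in> polyspace n 0 I" unfolding polyspace_def
    by (intro CollectI exI[of _ "[:c:]"]) (auto simp: monom_vec_def)
qed

lemma polyspace_Suc:
  "polyspace n (Suc r) I = {\<lambda>k. w k + c * monom_vec n I (Suc r) k | w c. w \<in> polyspace n r I}"
proof (intro set_eqI iffI)
  fix x assume "x \<in> polyspace n (Suc r) I"
  then obtain p where p: "degree p \<le> Suc r" "\<forall>k. x k = (if k \<in> ivl_set I then poly p (real k / real n) else 0)"
    unfolding polyspace_def by blast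
  define c where "c = coeff p (Suc r)"
  define q where "q = p - monom c (Suc r)"
  have "degree q \<le> r"
    using p(1) by (intro degree_le) (auto simp: q_def c_def coeff_monom coeff_eq_0)
  let ?w = "\<lambda>k. if k \<in> ivl_set I then poly q (real k / real n) else 0"
  have "?w \<in> polyspace n r I"
    using \<open>degree q \<le> r\<close> unfolding polyspace_def by blast
  moreover have "x = (\<lambda>k. ?w k + c * monom_vec n I (Suc r) k)"
    using p(2) by (auto simp: monom_vec_def q_def poly_monom)
  ultimately show "x \<in> {\<lambda>k. w k + c * monom_vec n I (Suc r) k | w c. w \<in> polyspace n r I}"
    by (intro CollectI exI[of _ ?w] exI[of _ c] conjI)
next
  fix x assume "x \<in> {\<lambda>k. w k + c * monom_vec n I (Suc r) k | w c. w \<in> polyspace n r I}"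
  then obtain w c where w: "w \<in> polyspace n r I" "x = (\<lambda>k. w k + c * monom_vec n I (Suc r) k)" by blast
  then obtain q where q: "degree q \<le> r" "\<forall>k. w k = (if k \<in> ivl_set I then poly q (real k / real n) else 0)"
    unfolding polyspace_def by blast
  have "degree (q + monom c (Suc r)) \<le> Suc r"
    using q(1) by (meson degree_add_le degree_monom_le le_SucI)
  then show "x \<in> polyspace n (Suc r) I" unfolding polyspace_def
    using q w(2) by (intro CollectI exI[of _ "q + monom c (Suc r)"]) (auto simp: monom_vec_def poly_monom)
qed

lemma orth_proj_polyspace_exists: "\<exists>w. orth_proj_on (ivl_set I) (polyspace n r I) v w"
proof (induction r arbitrary: v)
  case 0
  have "lin_closed {\<lambda>k. 0 :: real}" "orth_proj_on (ivl_set I) {\<lambda>k. 0} v' (\<lambda>k. 0)" for v'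
    by (simp_all add: lin_closed_def orth_proj_on_def inner_on_def)
  then show ?case
    unfolding polyspace_0 by (blast intro: orth_proj_on_extend[where A = "ivl_set I"] finite_ivl_set)
next
  case (Suc r)
  show ?case
    unfolding polyspace_Suc by (rule orth_proj_on_extend[OF finite_ivl_set lin_closed_polyspace Suc])
qed

lemma orth_proj_polyspace_unique:
  "orth_proj_on (ivl_set I) (polyspace n r I) v w1 \<Longrightarrow>
    orth_proj_on (ivl_set I) (polyspace n r I) v w2 \<Longrightarrow> w1 = w2"
  using polyspace_vanishes_outside
  by (intro orth_proj_on_unique[OF finite_ivl_set lin_closed_polyspace]) blast+

lemma orth_proj_projfit: "orth_proj_on (ivl_set I) (polyspace n r I) v (projfit n r v I)"
proof -
  have "\<exists>!w. orth_proj_on (ivl_set I) (polyspace n r I) v w"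
    using orth_proj_polyspace_exists orth_proj_polyspace_unique by (rule ex_ex1I)
  then show ?thesis
    unfolding projfit_def orth_proj_on_def inner_on_def by (rule theI')
qed

lemma projfit_add: "projfit n r (\<lambda>k. a k + b k) I k = projfit n r a I k + projfit n r b I k"
proof -
  have "orth_proj_on (ivl_set I) (polyspace n r I) (\<lambda>k. a k + b k)
      (\<lambda>k. projfit n r a I k + projfit n r b I k)"
    by (intro orth_proj_on_add lin_closed_polyspace orth_proj_projfit)
  then have "projfit n r (\<lambda>k. a k + b k) I = (\<lambda>k. projfit n r a I k + projfit n r b I k)"
    by (rule orth_proj_polyspace_unique[OF orth_proj_projfit])
  then show ?thesis by simp
qed

lemma finite_intervals: "finite (intervals n)"
  by (rule finite_subset[of _ "{1..n} \<times> {1..n}"]) (auto simp: intervals_def)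

lemma ivl_card_ge_1: "I \<in> intervals n \<Longrightarrow> 1 \<le> ivl_card I"
  by (auto simp: intervals_def ivl_card_def)

lemma finite_subivls_at: "finite (subivls_at n i J)"
  using finite_intervals by (simp add: subivls_at_def)

lemma finite_ivls_at: "finite (ivls_at n i)"
  using finite_intervals by (simp add: ivls_at_def)

lemma singleton_ivl_in_subivls_at: "J \<in> ivls_at n i \<Longrightarrow> (i, i) \<in> subivls_at n i J"
  by (auto simp: subivls_at_def ivls_at_def intervals_def ivl_set_def)

lemma singleton_ivl_in_ivls_at: "i \<in> {1..n} \<Longrightarrow> (i, i) \<in> ivls_at n i"
  by (auto simp: ivls_at_def intervals_def ivl_set_def)

lemma abs_projfit_le_eff_noise:
  assumes "I \<in> intervals n" "i \<in> ivl_set I"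
  shows "\<bar>projfit n r eps I i\<bar> * sqrt (real (ivl_card I)) \<le> eff_noise n r eps"
proof -
  have "\<bar>projfit n r eps I i\<bar> \<le> sup_norm_on (projfit n r eps I) I"
    unfolding sup_norm_on_def using assms(2) finite_ivl_set by (intro Max_ge) auto
  then have "\<bar>projfit n r eps I i\<bar> * sqrt (real (ivl_card I))
      \<le> sup_norm_on (projfit n r eps I) I * sqrt (real (ivl_card I))"
    by (intro mult_right_mono) auto
  also have "\<dots> \<le> eff_noise n r eps"
    unfolding eff_noise_def using assms(1) finite_intervals by (intro Max_ge) auto
  finally show ?thesis .
qed

lemma linear_minus_quadratic_le:
  fixes M t lam :: real
  assumes "lam > 0"
  shows "M * t - lam * t\<^sup>2 \<le> M\<^sup>2 / (4 * lam)"
proof -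
  have "M\<^sup>2 / (4 * lam) - (M * t - lam * t\<^sup>2) = (M - 2 * lam * t)\<^sup>2 / (4 * lam)"
    using assms by (simp add: field_simps power2_eq_square)
  also have "\<dots> \<ge> 0"
    using assms by simp
  finally show ?thesis by simp
qed

lemma dist_bd_le_ivl_card:
  assumes "i \<in> ivl_set I" "fst J \<in> ivl_set I \<or> snd J \<in> ivl_set I"
  shows "dist_bd i J \<le> ivl_card I"
  using assms by (auto simp: dist_bd_def ivl_card_def ivl_set_def)

lemma Cfun_cases:
  obtains "Cfun I J = 1"
    | "I = J" "Cfun I J = -1"
    | "Cfun I J = 0" "fst J \<in> ivl_set I \<or> snd J \<in> ivl_set I"
  unfolding Cfun_def
  by (cases "fst J \<notin> ivl_set I \<and> snd J \<notin> ivl_set I"; cases "I = J") auto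

definition se_bound :: "real \<Rightarrow> real \<Rightarrow> nat \<Rightarrow> ivl \<Rightarrow> real" where
  "se_bound M lam i J = M / sqrt (real (dist_bd i J)) + M / sqrt (real (ivl_card J))
     + lam / real (ivl_card J) + M\<^sup>2 / (4 * lam)"

lemma SE_eq_se_bound: "lam \<noteq> 0 \<Longrightarrow> SE n r eps i J lam = ereal (se_bound (eff_noise n r eps) lam i J)"
  by (simp add: SE_def se_bound_def)

lemma penalized_noise_le_se_bound:
  fixes M x lam :: real
  assumes "lam > 0" and x: "\<bar>x\<bar> * sqrt (real (ivl_card I)) \<le> M"
    and I: "I \<in> subivls_at n i J" and J: "J \<in> ivls_at n i"
  shows "x - lam * Cfun I J / real (ivl_card I) \<le> se_bound M lam i J"
proof -
  have "I \<in> intervals n" "i \<in> ivl_set I" using I by (auto simp: subivls_at_def)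
  have "J \<in> intervals n" "i \<in> ivl_set J" using J by (auto simp: ivls_at_def)
  define s where "s = sqrt (real (ivl_card I))"
  have "s > 0" using ivl_card_ge_1[OF \<open>I \<in> intervals n\<close>] by (simp add: s_def)
  have "x * s \<le> M" using x \<open>s > 0\<close> abs_ge_self[of x] unfolding s_def
    by (meson dual_order.trans mult_right_mono less_imp_le)
  then have x_le: "x \<le> M / s" using \<open>s > 0\<close> by (simp add: pos_le_divide_eq)
  have "M \<ge> 0" using x by (meson abs_ge_zero order_trans real_sqrt_ge_zero of_nat_0_le_iff zero_le_mult_iff)
  have "1 \<le> dist_bd i J" using \<open>i \<in> ivl_set J\<close> by (auto simp: dist_bd_def ivl_set_def)
  have terms_nonneg: "M / sqrt (real (dist_bd i J)) \<ge> 0" "M / sqrt (real (ivl_card J)) \<ge> 0"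
    "lam / real (ivl_card J) \<ge> 0" "M\<^sup>2 / (4 * lam) \<ge> 0"
    using \<open>M \<ge> 0\<close> \<open>lam > 0\<close> by simp_all
  show ?thesis
  proof (cases rule: Cfun_cases[of I J])
    case 1
    have "M / s - lam / real (ivl_card I) = M * (1 / s) - lam * (1 / s)\<^sup>2"
      using \<open>s > 0\<close> by (simp add: s_def power_divide)
    also have "\<dots> \<le> M\<^sup>2 / (4 * lam)"
      using \<open>lam > 0\<close> by (rule linear_minus_quadratic_le)
    finally show ?thesis
      using 1 x_le terms_nonneg by (simp add: se_bound_def)
  next
    case 2
    then show ?thesis
      using x_le terms_nonneg by (simp add: se_bound_def s_def)
  next
    case 3
    then have "sqrt (real (dist_bd i J)) \<le> s"
      using dist_bd_le_ivl_card[OF \<open>i \<in> ivl_set I\<close>] by (simp add: s_def)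
    then have "M / s \<le> M / sqrt (real (dist_bd i J))"
      using \<open>M \<ge> 0\<close> \<open>s > 0\<close> \<open>1 \<le> dist_bd i J\<close> by (intro divide_left_mono) auto
    then show ?thesis
      using 3 x_le terms_nonneg by (simp add: se_bound_def)
  qed
qed

lemma minmax_upper_dev_at:
  assumes "lam > 0" and y: "\<forall>k. y k = theta k + eps k" and J: "J \<in> ivls_at n i"
    and th: "th \<le> (MAX I \<in> subivls_at n i J. projfit n r y I i - lam * Cfun I J / real (ivl_card I))"
  shows "th - theta i \<le> bias_plus n r i J theta + se_bound (eff_noise n r eps) lam i J"
proof -
  have "projfit n r y I i - lam * Cfun I J / real (ivl_card I)
      \<le> theta i + bias_plus n r i J theta + se_bound (eff_noise n r eps) lam i J"
    if I: "I \<in> subivls_at n i J" for I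
  proof -
    have "projfit n r theta I i - theta i \<le> bias_plus n r i J theta"
      unfolding bias_plus_def using I finite_subivls_at by (intro Max_ge) auto
    moreover have "projfit n r eps I i - lam * Cfun I J / real (ivl_card I)
        \<le> se_bound (eff_noise n r eps) lam i J"
      using I J \<open>lam > 0\<close> abs_projfit_le_eff_noise
      by (intro penalized_noise_le_se_bound) (auto simp: subivls_at_def)
    moreover have "y = (\<lambda>k. theta k + eps k)" using y by auto
    ultimately show ?thesis by (simp add: projfit_add)
  qed
  then have "(MAX I \<in> subivls_at n i J. projfit n r y I i - lam * Cfun I J / real (ivl_card I))
      \<le> theta i + bias_plus n r i J theta + se_bound (eff_noise n r eps) lam i J"
    using finite_subivls_at singleton_ivl_in_subivls_at[OF J] by (subst Max_le_iff) auto
  then show ?thesis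
    using th by linarith
qed

lemma minmax_lower_dev_at:
  assumes "lam > 0" and y: "\<forall>k. y k = theta k + eps k" and J: "J \<in> ivls_at n i"
    and th: "(MIN I \<in> subivls_at n i J. projfit n r y I i + lam * Cfun I J / real (ivl_card I)) \<le> th"
  shows "bias_minus n r i J theta - se_bound (eff_noise n r eps) lam i J \<le> th - theta i"
proof -
  have "theta i + bias_minus n r i J theta - se_bound (eff_noise n r eps) lam i J
      \<le> projfit n r y I i + lam * Cfun I J / real (ivl_card I)"
    if I: "I \<in> subivls_at n i J" for I
  proof -
    have "bias_minus n r i J theta \<le> projfit n r theta I i - theta i"
      unfolding bias_minus_def using I finite_subivls_at by (intro Min_le) auto
    moreover have "- projfit n r eps I i - lam * Cfun I J / real (ivl_card I)
        \<le> se_bound (eff_noise n r eps) lam i J"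
      using I J \<open>lam > 0\<close> abs_projfit_le_eff_noise
      by (intro penalized_noise_le_se_bound) (auto simp: subivls_at_def)
    moreover have "y = (\<lambda>k. theta k + eps k)" using y by auto
    ultimately show ?thesis by (simp add: projfit_add)
  qed
  then have "theta i + bias_minus n r i J theta - se_bound (eff_noise n r eps) lam i J
      \<le> (MIN I \<in> subivls_at n i J. projfit n r y I i + lam * Cfun I J / real (ivl_card I))"
    using finite_subivls_at singleton_ivl_in_subivls_at[OF J] by (subst Min_ge_iff) auto
  then show ?thesis
    using th by linarith
qed

lemma minmax_dev_bounds_at:
  assumes "lam \<ge> 0" "\<forall>k. y k = theta k + eps k" "is_minmax_TF n r lam y th"
    and J: "J \<in> ivls_at n i"
  shows "ereal (bias_minus n r i J theta) - SE n r eps i J lam \<le> ereal (th i - theta i)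
    \<and> ereal (th i - theta i) \<le> ereal (bias_plus n r i J theta) + SE n r eps i J lam"
proof (cases "lam = 0")
  case True
  then show ?thesis by (simp add: SE_def)
next
  case False
  have "i \<in> {1..n}"
    using J by (auto simp: ivls_at_def intervals_def ivl_set_def)
  then have minmax: "(MAX J \<in> ivls_at n i. MIN I \<in> subivls_at n i J.
         projfit n r y I i + lam * Cfun I J / real (ivl_card I)) \<le> th i"
    "th i \<le> (MIN J \<in> ivls_at n i. MAX I \<in> subivls_at n i J.
         projfit n r y I i - lam * Cfun I J / real (ivl_card I))"
    using assms(3) unfolding is_minmax_TF_def by blast+
  have "(MIN I \<in> subivls_at n i J. projfit n r y I i + lam * Cfun I J / real (ivl_card I))
      \<le> (MAX J \<in> ivls_at n i. MIN I \<in> subivls_at n i J.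
         projfit n r y I i + lam * Cfun I J / real (ivl_card I))"
    using J finite_ivls_at by (intro Max_ge) auto
  moreover have "(MIN J \<in> ivls_at n i. MAX I \<in> subivls_at n i J.
         projfit n r y I i - lam * Cfun I J / real (ivl_card I))
      \<le> (MAX I \<in> subivls_at n i J. projfit n r y I i - lam * Cfun I J / real (ivl_card I))"
    using J finite_ivls_at by (intro Min_le) auto
  moreover have "lam > 0" using False assms(1) by simp
  ultimately show ?thesis
    using minmax minmax_lower_dev_at[OF _ assms(2) J] minmax_upper_dev_at[OF _ assms(2) J]
    by (simp add: SE_eq_se_bound False)
qed

theorem proposition1:
  fixes n r :: nat and lam :: real and theta eps y thetahat :: "nat \<Rightarrow> real"
  assumes "lam \<ge> 0"
    and "\<forall>k. y k = theta k + eps k"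
    and "is_minmax_TF n r lam y thetahat"
    and "i \<in> {1..n}"
  shows "(MAX J \<in> ivls_at n i. ereal (bias_minus n r i J theta) - SE n r eps i J lam)
           \<le> ereal (thetahat i - theta i)
         \<and> ereal (thetahat i - theta i)
           \<le> (MIN J \<in> ivls_at n i. ereal (bias_plus n r i J theta) + SE n r eps i J lam)"
proof -
  have "ivls_at n i \<noteq> {}"
    using singleton_ivl_in_ivls_at[OF assms(4)] by blast
  moreover have "\<forall>J \<in> ivls_at n i.
      ereal (bias_minus n r i J theta) - SE n r eps i J lam \<le> ereal (thetahat i - theta i)
    \<and> ereal (thetahat i - theta i) \<le> ereal (bias_plus n r i J theta) + SE n r eps i J lam"
    using minmax_dev_bounds_at[OF assms(1-3)] by blast
  ultimately show ?thesis
    using finite_ivls_at by (simp add: Max_le_iff Min_ge_iff)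
qed

end
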